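(* Let $\gamma$ be an $\mathbb{F}$-functorial and let $\mathfrak{F}(\gamma)$ be the class of all finite groups $G$ with $\gamma(G)=G$. Then $\mathfrak{F}(\gamma)=\mathfrak{F}(\gamma^\infty)$, $\mathfrak{F}(\gamma)$ is closed under homomorphic images and $N_0$-closed, and $G_{\mathfrak{F}(\gamma)}=\gamma^\infty(G)$ for every group $G$.
   Context: All groups are finite. A functorial is a function $\theta$ assigning to each group $G$ a characteristic subgroup $\theta(G)$ such that $f(\theta(G))=\theta(f(G))$ for every isomorphism $f:G\to G^*$. An $\mathbb{F}$-functorial is a functorial $\gamma$ satisfying, for every group $G$: (F1) $f(\gamma(G))\subseteq\gamma(f(G))$ for every epimorphism $f:G\to G^*$; (F2) $\gamma(N)\subseteq\gamma(G)$ for every $N\trianglelefteq G$; (F3) $C_G(\gamma(G))\subseteq\gamma(G)$; (F4) $\gamma(G)/\Phi(G)\subseteq\mathrm{Soc}(G/\Phi(G))$. $\gamma^{(1)}=\gamma$, $\gamma^{(i+1)}(G)=\gamma(\gamma^{(i)}(G))$, $\gamma^\infty(G)=\bigcap_i\gamma^{(i)}(G)$. A class $\mathfrak{X}$ is $N_0$-closed if $G=NM$ with $N,M$ normal $\mathfrak{X}$-subgroups of $G$ implies $G\in\mathfrak{X}$. For an $N_0$-closed class $\mathfrak{X}$ containing $1$, $G_\mathfrak{X}=\langle H\trianglelefteq G\mid H\in\mathfrak{X}\rangle$ is the largest normal $\mathfrak{X}$-subgroup of $G$. *)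

theory Defs
  imports "HOL-Algebra.Algebra"
begin

text \<open>Convention: "all finite groups" are represented by finite groups whose carrier is a
subset of the natural numbers (every finite group is isomorphic to such a group).\<close>

type_synonym grp = "nat monoid"

definition finite_group :: "('a, 'b) monoid_scheme \<Rightarrow> bool" where
  "finite_group G \<longleftrightarrow> group G \<and> finite (carrier G)"

definition char_subgroup :: "'a set \<Rightarrow> ('a, 'b) monoid_scheme \<Rightarrow> bool" where
  "char_subgroup H G \<longleftrightarrow> subgroup H G \<and> (\<forall>f \<in> iso G G. f ` H = H)"

definition centralizer :: "('a, 'b) monoid_scheme \<Rightarrow> 'a set \<Rightarrow> 'a set" where
  "centralizer G S = {g \<in> carrier G. \<forall>h \<in> S. g \<otimes>\<^bsub>G\<^esub> h = h \<otimes>\<^bsub>G\<^esub> g}"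

definition maximal_subgroup :: "'a set \<Rightarrow> ('a, 'b) monoid_scheme \<Rightarrow> bool" where
  "maximal_subgroup H G \<longleftrightarrow> subgroup H G \<and> H \<noteq> carrier G \<and>
     (\<forall>K. subgroup K G \<and> H \<subseteq> K \<longrightarrow> K = H \<or> K = carrier G)"

definition frattini :: "('a, 'b) monoid_scheme \<Rightarrow> 'a set" where
  "frattini G = carrier G \<inter> \<Inter> {H. maximal_subgroup H G}"

definition minimal_normal :: "'a set \<Rightarrow> ('a, 'b) monoid_scheme \<Rightarrow> bool" where
  "minimal_normal N G \<longleftrightarrow> N \<lhd> G \<and> N \<noteq> {\<one>\<^bsub>G\<^esub>} \<and>
     (\<forall>M. M \<lhd> G \<and> M \<subseteq> N \<longrightarrow> M = {\<one>\<^bsub>G\<^esub>} \<or> M = N)"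

definition socle :: "('a, 'b) monoid_scheme \<Rightarrow> 'a set" where
  "socle G = generate G (\<Union> {N. minimal_normal N G})"

definition functorial :: "(grp \<Rightarrow> nat set) \<Rightarrow> bool" where
  "functorial \<theta> \<longleftrightarrow>
     (\<forall>G. finite_group G \<longrightarrow> char_subgroup (\<theta> G) G) \<and>
     (\<forall>G H f. finite_group G \<and> finite_group H \<and> f \<in> iso G H \<longrightarrow> f ` \<theta> G = \<theta> H)"

definition F_functorial :: "(grp \<Rightarrow> nat set) \<Rightarrow> bool" where
  "F_functorial \<gamma> \<longleftrightarrow> functorial \<gamma> \<and>
     (\<forall>G H f. finite_group G \<and> finite_group H \<and> f \<in> hom G H \<and> f ` carrier G = carrier H \<longrightarrow> f ` \<gamma> G \<subseteq> \<gamma> H) \<and>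
     (\<forall>G N. finite_group G \<and> N \<lhd> G \<longrightarrow> \<gamma> (G\<lparr>carrier := N\<rparr>) \<subseteq> \<gamma> G) \<and>
     (\<forall>G. finite_group G \<longrightarrow> centralizer G (\<gamma> G) \<subseteq> \<gamma> G) \<and>
     (\<forall>G. finite_group G \<longrightarrow>
        r_coset G (frattini G) ` \<gamma> G \<subseteq> socle (FactGroup G (frattini G)))"

primrec giter :: "(grp \<Rightarrow> nat set) \<Rightarrow> nat \<Rightarrow> grp \<Rightarrow> nat set" where
  "giter \<gamma> 0 G = carrier G"
| "giter \<gamma> (Suc i) G = \<gamma> (G\<lparr>carrier := giter \<gamma> i G\<rparr>)"

definition gamma_inf :: "(grp \<Rightarrow> nat set) \<Rightarrow> grp \<Rightarrow> nat set" where
  "gamma_inf \<gamma> G = (\<Inter>i \<in> {1..}. giter \<gamma> i G)"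

definition FF :: "(grp \<Rightarrow> nat set) \<Rightarrow> grp \<Rightarrow> bool" where
  "FF \<theta> G \<longleftrightarrow> finite_group G \<and> \<theta> G = carrier G"

definition hom_image_closed :: "(grp \<Rightarrow> bool) \<Rightarrow> bool" where
  "hom_image_closed P \<longleftrightarrow>
     (\<forall>G H f. P G \<and> finite_group H \<and> f \<in> hom G H \<and> f ` carrier G = carrier H \<longrightarrow> P H)"

definition N0_closed :: "(grp \<Rightarrow> bool) \<Rightarrow> bool" where
  "N0_closed P \<longleftrightarrow>
     (\<forall>G N M. finite_group G \<and> N \<lhd> G \<and> M \<lhd> G \<and>
        P (G\<lparr>carrier := N\<rparr>) \<and> P (G\<lparr>carrier := M\<rparr>) \<and> N <#>\<^bsub>G\<^esub> M = carrier G \<longrightarrow> P G)"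

definition X_radical :: "(grp \<Rightarrow> bool) \<Rightarrow> grp \<Rightarrow> nat set" where
  "X_radical P G = generate G (\<Union> {H. H \<lhd> G \<and> P (G\<lparr>carrier := H\<rparr>)})"

end

theory Submission
  imports Defs
begin

text \<open>The iterates \<open>\<gamma>^(i)(G)\<close> form a descending chain of subgroups of \<open>G\<close>, each
characteristic in the previous one and hence, inductively, normal in \<open>G\<close>. By finiteness the chain
becomes stationary at \<open>\<gamma>^\<infinity>(G)\<close>, which is therefore a normal \<open>\<FF>(\<gamma>)\<close>-subgroup.
Conversely, if \<open>H \<unlhd> G\<close> satisfies \<open>\<gamma>(H) = H\<close> and \<open>H \<subseteq> \<gamma>^(i)(G)\<close>, then (F2) applied
inside \<open>\<gamma>^(i)(G)\<close> gives \<open>H = \<gamma>(H) \<subseteq> \<gamma>^(i+1)(G)\<close>; so \<open>\<gamma>^\<infinity>(G)\<close> is the largest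
normal \<open>\<FF>(\<gamma>)\<close>-subgroup. Closure under images is (F1), and for \<open>G = NM\<close> (F2) puts both
\<open>N = \<gamma>(N)\<close> and \<open>M = \<gamma>(M)\<close> inside the subgroup \<open>\<gamma>(G)\<close>.\<close>

lemma (in group) conjugation_iso:
  assumes "g \<in> carrier G"
  shows "(\<lambda>x. g \<otimes> x \<otimes> inv g) \<in> iso G G"
proof -
  have "bij_betw (\<lambda>x. g \<otimes> x \<otimes> inv g) (carrier G) (carrier G)"
    using conjugation_is_bij[OF assms] by simp
  moreover have "(\<lambda>x. g \<otimes> x \<otimes> inv g) \<in> hom G G"
    using assms by (intro homI) (simp_all add: m_assoc, simp add: m_assoc[symmetric])
  ultimately show ?thesis
    unfolding iso_def by blast
qed

lemma (in normal) conjugation_image: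
  assumes "g \<in> carrier G"
  shows "(\<lambda>x. g \<otimes> x \<otimes> inv g) ` H = H"
proof
  show "(\<lambda>x. g \<otimes> x \<otimes> inv g) ` H \<subseteq> H"
    using assms inv_op_closed2 by blast
  show "H \<subseteq> (\<lambda>x. g \<otimes> x \<otimes> inv g) ` H"
  proof
    fix h assume "h \<in> H"
    then have "h = g \<otimes> (inv g \<otimes> h \<otimes> g) \<otimes> inv g" and "inv g \<otimes> h \<otimes> g \<in> H"
      using assms conjugation_is_surj inv_op_closed1 by auto
    then show "h \<in> (\<lambda>x. g \<otimes> x \<otimes> inv g) ` H" by blast
  qed
qed

lemma (in group) subgroup_of_subgroup:
  assumes "subgroup H G" "subgroup K (G\<lparr>carrier := H\<rparr>)"
  shows "subgroup K G"
proof (rule group_incl_imp_subgroup)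
  have "K \<subseteq> H"
    using subgroup.subset[OF assms(2)] by simp
  then show "K \<subseteq> carrier G"
    using subgroup.subset[OF assms(1)] by blast
  have "group ((G\<lparr>carrier := H\<rparr>)\<lparr>carrier := K\<rparr>)"
    using assms subgroup.subgroup_is_group subgroup_imp_group by blast
  then show "group (G\<lparr>carrier := K\<rparr>)" by simp
qed

lemma (in group) char_subgroup_of_normal_imp_normal:
  assumes N: "N \<lhd> G" and K: "char_subgroup K (G\<lparr>carrier := N\<rparr>)"
  shows "K \<lhd> G"
  unfolding normal_inv_iff
proof (intro conjI ballI)
  have sub_N: "subgroup N G"
    using N normal_imp_subgroup by blast
  have sub_K: "subgroup K (G\<lparr>carrier := N\<rparr>)"
    using K unfolding char_subgroup_def by blast
  then show "subgroup K G"
    using sub_N subgroup_of_subgroup by blast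
  fix g h assume g: "g \<in> carrier G" and h: "h \<in> K"
  let ?c = "\<lambda>x. g \<otimes> x \<otimes> inv g"
  have "?c ` N = N"
    using normal.conjugation_image[OF N g] .
  then have "restrict ?c N \<in> iso (G\<lparr>carrier := N\<rparr>) (G\<lparr>carrier := N\<rparr>)"
    using iso_restrict[OF conjugation_iso[OF g] is_group is_group sub_N] by simp
  then have "restrict ?c N ` K = K"
    using K unfolding char_subgroup_def by blast
  moreover have "K \<subseteq> N"
    using sub_K subgroup.subset by fastforce
  ultimately show "g \<otimes> h \<otimes> inv g \<in> K"
    using h by auto
qed

lemma finite_group_subgroup:
  assumes "finite_group G" "subgroup H G"
  shows "finite_group (G\<lparr>carrier := H\<rparr>)"
  using assms unfolding finite_group_def
  by (simp add: group.subgroup_imp_group) (meson finite_subset subgroup.subset)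

lemma finite_group_normal:
  assumes "finite_group G" "H \<lhd> G"
  shows "finite_group (G\<lparr>carrier := H\<rparr>)"
  using assms finite_group_subgroup normal_imp_subgroup by blast

lemma decreasing_chain_stabilizes:
  assumes decr: "\<And>i. A (Suc i) \<subseteq> A i" and fin: "finite (A 0)"
  shows "\<exists>n. A (Suc n) = A n"
proof (rule ccontr)
  assume "\<not> ?thesis"
  then have strict: "A (Suc i) \<subset> A i" for i
    using decr by blast
  have "card (A i) + i \<le> card (A 0)" for i
  proof (induction i)
    case (Suc i)
    have "finite (A i)"
      using fin lift_Suc_antimono_le[of A, OF decr] finite_subset by blast
    then have "card (A (Suc i)) < card (A i)"
      using strict psubset_card_mono by blast
    with Suc show ?case by simp
  qed simp
  from this[of "Suc (card (A 0))"] show False by simp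
qed

context
  fixes \<gamma> :: "grp \<Rightarrow> nat set"
  assumes F: "F_functorial \<gamma>"
begin

lemma char_subgroup_gamma:
  "finite_group G \<Longrightarrow> char_subgroup (\<gamma> G) G"
  using F unfolding F_functorial_def functorial_def by simp

lemma subgroup_gamma:
  "finite_group G \<Longrightarrow> subgroup (\<gamma> G) G"
  using char_subgroup_gamma unfolding char_subgroup_def by simp

lemma gamma_subset_carrier:
  "finite_group G \<Longrightarrow> \<gamma> G \<subseteq> carrier G"
  using subgroup_gamma subgroup.subset by blast

lemma gamma_epi_image:
  "\<lbrakk>finite_group G; finite_group H; f \<in> hom G H; f ` carrier G = carrier H\<rbrakk>
    \<Longrightarrow> f ` \<gamma> G \<subseteq> \<gamma> H"
  using F unfolding F_functorial_def by simp

lemma gamma_normal_subgroup_mono: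
  "\<lbrakk>finite_group G; N \<lhd> G\<rbrakk> \<Longrightarrow> \<gamma> (G\<lparr>carrier := N\<rparr>) \<subseteq> \<gamma> G"
  using F unfolding F_functorial_def by simp

lemma FF_iff_carrier_subset_gamma:
  "FF \<gamma> G \<longleftrightarrow> finite_group G \<and> carrier G \<subseteq> \<gamma> G"
  unfolding FF_def using gamma_subset_carrier by blast

lemma giter_normal:
  assumes G: "finite_group G"
  shows "giter \<gamma> i G \<lhd> G"
proof (induction i)
  case 0
  then show ?case
    using G group.normal_self unfolding finite_group_def by fastforce
next
  case (Suc i)
  then have "char_subgroup (giter \<gamma> (Suc i) G) (G\<lparr>carrier := giter \<gamma> i G\<rparr>)"
    using char_subgroup_gamma finite_group_normal[OF G] by simp
  then show ?case
    using G Suc group.char_subgroup_of_normal_imp_normal unfolding finite_group_def by blast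
qed

lemma giter_Suc_subset:
  assumes G: "finite_group G"
  shows "giter \<gamma> (Suc i) G \<subseteq> giter \<gamma> i G"
  using gamma_subset_carrier[OF finite_group_normal[OF G giter_normal[OF G]]] by simp

lemma giter_antimono:
  assumes G: "finite_group G"
  shows "i \<le> j \<Longrightarrow> giter \<gamma> j G \<subseteq> giter \<gamma> i G"
  using lift_Suc_antimono_le[of "\<lambda>i. giter \<gamma> i G", OF giter_Suc_subset[OF G]] by simp

lemma giter_eventually_const:
  assumes "giter \<gamma> (Suc n) G = giter \<gamma> n G" "n \<le> m"
  shows "giter \<gamma> m G = giter \<gamma> n G"
  using assms(2) by (induction m rule: dec_induct) (use assms(1) in simp_all)

lemma gamma_inf_eq_stable_giter:
  assumes G: "finite_group G" and stable: "giter \<gamma> (Suc n) G = giter \<gamma> n G"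
  shows "gamma_inf \<gamma> G = giter \<gamma> n G"
proof
  show "gamma_inf \<gamma> G \<subseteq> giter \<gamma> n G"
    unfolding gamma_inf_def using stable by (metis INT_lower atLeast_iff le_add1 plus_1_eq_Suc)
  have "giter \<gamma> n G \<subseteq> giter \<gamma> i G" for i
  proof (cases "i \<le> n")
    case True
    then show ?thesis by (rule giter_antimono[OF G])
  next
    case False
    then show ?thesis using giter_eventually_const[OF stable, of i] by simp
  qed
  then show "giter \<gamma> n G \<subseteq> gamma_inf \<gamma> G"
    unfolding gamma_inf_def by blast
qed

lemma gamma_inf_stable:
  assumes G: "finite_group G"
  obtains n where "gamma_inf \<gamma> G = giter \<gamma> n G" "giter \<gamma> (Suc n) G = giter \<gamma> n G"
proof -
  have "finite (giter \<gamma> 0 G)"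
    using G unfolding finite_group_def by simp
  then obtain n where "giter \<gamma> (Suc n) G = giter \<gamma> n G"
    using decreasing_chain_stabilizes[of "\<lambda>i. giter \<gamma> i G", OF giter_Suc_subset[OF G]] by blast
  with that gamma_inf_eq_stable_giter[OF G] show ?thesis by blast
qed

lemma gamma_inf_normal:
  assumes G: "finite_group G"
  shows "gamma_inf \<gamma> G \<lhd> G"
proof -
  obtain n where "gamma_inf \<gamma> G = giter \<gamma> n G"
    using gamma_inf_stable[OF G] .
  then show ?thesis
    using giter_normal[OF G] by simp
qed

lemma FF_gamma_inf:
  assumes G: "finite_group G"
  shows "FF \<gamma> (G\<lparr>carrier := gamma_inf \<gamma> G\<rparr>)"
proof -
  obtain n where "gamma_inf \<gamma> G = giter \<gamma> n G" "giter \<gamma> (Suc n) G = giter \<gamma> n G"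
    using gamma_inf_stable[OF G] .
  then have "\<gamma> (G\<lparr>carrier := gamma_inf \<gamma> G\<rparr>) = gamma_inf \<gamma> G"
    by simp
  then show ?thesis
    unfolding FF_def using finite_group_normal[OF G gamma_inf_normal[OF G]] by simp
qed

lemma normal_FF_subset_giter:
  assumes G: "finite_group G" and H: "H \<lhd> G" "FF \<gamma> (G\<lparr>carrier := H\<rparr>)"
  shows "H \<subseteq> giter \<gamma> i G"
proof (induction i)
  case 0
  then show ?case
    using H normal_imp_subgroup subgroup.subset by fastforce
next
  case (Suc i)
  let ?N = "G\<lparr>carrier := giter \<gamma> i G\<rparr>"
  have "H \<lhd> ?N"
    using G H Suc giter_normal normal_imp_subgroup group.normal_restrict_supergroup
    unfolding finite_group_def by blast
  then have "\<gamma> (?N\<lparr>carrier := H\<rparr>) \<subseteq> \<gamma> ?N"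
    using gamma_normal_subgroup_mono finite_group_normal[OF G giter_normal[OF G]] by blast
  then show ?case
    using H(2) unfolding FF_def by simp
qed

lemma normal_FF_subset_gamma_inf:
  "\<lbrakk>finite_group G; H \<lhd> G; FF \<gamma> (G\<lparr>carrier := H\<rparr>)\<rbrakk> \<Longrightarrow> H \<subseteq> gamma_inf \<gamma> G"
  unfolding gamma_inf_def using normal_FF_subset_giter by blast

lemma FF_eq_FF_gamma_inf: "FF \<gamma> = FF (gamma_inf \<gamma>)"
proof (intro ext iffI)
  fix G
  assume "FF \<gamma> G"
  then have "giter \<gamma> i G = carrier G" for i
    unfolding FF_def by (induction i) auto
  with \<open>FF \<gamma> G\<close> show "FF (gamma_inf \<gamma>) G"
    unfolding FF_def gamma_inf_def by auto
next
  fix G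
  assume "FF (gamma_inf \<gamma>) G"
  moreover have "gamma_inf \<gamma> G \<subseteq> giter \<gamma> 1 G"
    unfolding gamma_inf_def by auto
  ultimately show "FF \<gamma> G"
    unfolding FF_iff_carrier_subset_gamma by (simp add: FF_def)
qed

lemma hom_image_closed_FF: "hom_image_closed (FF \<gamma>)"
  unfolding hom_image_closed_def
proof (intro allI impI, elim conjE)
  fix G H :: grp and f
  assume G: "FF \<gamma> G" and H: "finite_group H" and f: "f \<in> hom G H" "f ` carrier G = carrier H"
  then have "carrier H = f ` \<gamma> G"
    unfolding FF_def by simp
  also have "\<dots> \<subseteq> \<gamma> H"
    using G H f gamma_epi_image unfolding FF_def by blast
  finally show "FF \<gamma> H"
    using H unfolding FF_iff_carrier_subset_gamma by simp
qed

lemma N0_closed_FF: "N0_closed (FF \<gamma>)"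
  unfolding N0_closed_def
proof (intro allI impI, elim conjE)
  fix G :: grp and N M
  assume G: "finite_group G" and N: "N \<lhd> G" "FF \<gamma> (G\<lparr>carrier := N\<rparr>)"
    and M: "M \<lhd> G" "FF \<gamma> (G\<lparr>carrier := M\<rparr>)" and NM: "N <#>\<^bsub>G\<^esub> M = carrier G"
  have "N \<subseteq> \<gamma> G" "M \<subseteq> \<gamma> G"
    using gamma_normal_subgroup_mono[OF G N(1)] gamma_normal_subgroup_mono[OF G M(1)] N(2) M(2)
    unfolding FF_def by simp_all
  then have "N <#>\<^bsub>G\<^esub> M \<subseteq> \<gamma> G"
    using subgroup_gamma[OF G] unfolding set_mult_def by (auto intro: subgroup.m_closed)
  then show "FF \<gamma> G"
    using G NM unfolding FF_iff_carrier_subset_gamma by simp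
qed

lemma X_radical_FF_eq_gamma_inf:
  assumes G: "finite_group G"
  shows "X_radical (FF \<gamma>) G = gamma_inf \<gamma> G"
  unfolding X_radical_def
proof
  show "generate G (\<Union> {H. H \<lhd> G \<and> FF \<gamma> (G\<lparr>carrier := H\<rparr>)}) \<subseteq> gamma_inf \<gamma> G"
  proof (rule group.generate_subgroup_incl)
    show "group G"
      using G unfolding finite_group_def by simp
    show "subgroup (gamma_inf \<gamma> G) G"
      using gamma_inf_normal[OF G] normal_imp_subgroup by blast
    show "\<Union> {H. H \<lhd> G \<and> FF \<gamma> (G\<lparr>carrier := H\<rparr>)} \<subseteq> gamma_inf \<gamma> G"
      using normal_FF_subset_gamma_inf[OF G] by blast
  qed
  show "gamma_inf \<gamma> G \<subseteq> generate G (\<Union> {H. H \<lhd> G \<and> FF \<gamma> (G\<lparr>carrier := H\<rparr>)})"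
    using G gamma_inf_normal FF_gamma_inf by (blast intro: generate.incl)
qed

end

theorem proposition4:
  fixes \<gamma> :: "grp \<Rightarrow> nat set"
  assumes "F_functorial \<gamma>"
  shows "FF \<gamma> = FF (gamma_inf \<gamma>)
    \<and> hom_image_closed (FF \<gamma>)
    \<and> N0_closed (FF \<gamma>)
    \<and> (\<forall>G. finite_group G \<longrightarrow> X_radical (FF \<gamma>) G = gamma_inf \<gamma> G)"
  using FF_eq_FF_gamma_inf hom_image_closed_FF N0_closed_FF X_radical_FF_eq_gamma_inf assms
  by blast

end
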